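(* Suppose Assumption A1 and Assumption A2(i) hold, let $K$ be $(\kappa,\gamma)$-strongly stable and $H=\lceil2\gamma^{-1}\log T\rceil$. Then for any $T\ge3$, $t\in[0,T-1]$, $k\in[0,H+1]$, $C>0$ and $M_{t-1-H},\dots,M_t,\check M_{t-k}\in\mathcal M$, with probability at least $1-\frac{30\sigma_w\kappa_B^2\kappa^6}{C\gamma^2(1-\gamma)}$, $$|F_t(M_{t-1-H:t})-F_t(M_{t-1-H:t-k-1},\check M_{t-k},M_{t-k+1:t})|\le2G_cC^2\log T\,(2\gamma^{-1}\log T+1)^{1/2}\,\|M_{t-k}-\check M_{t-k}\|_F.$$
   Context: Linear system $x_{t+1}=Ax_t+Bu_t+w_t$; $\kappa_B:=\max\{\|B\|,1\}$; $w_s:=0$ for $s<0$. $(\kappa,\gamma)$-strong stability: complex $P,Q$ with $A-BK=QPQ^{-1}$, $\|P\|\le1-\gamma$, $\|K\|,\|Q\|,\|Q^{-1}\|\le\kappa$. $A_K:=A-BK$. Assumption A1: $c_t$ convex, differentiable, $\|\nabla_xc_t(x,u)\|\le G_c\|x\|$, $\|\nabla_uc_t(x,u)\|\le G_c\|u\|$ for all $x,u,t$, $G_c\ge1$. Assumption A2(i): $\mathbb E\|w_t\|\le\sigma_w$ for all $t$. For $M=\{M^{[0]},\dots,M^{[H-1]}\}$, $\|M\|_F:=\|[M^{[0]},\dots,M^{[H-1]}]\|_F$; $\mathcal M:=\{M:\|M^{[i]}\|\le2\kappa_B\kappa^3(1-\gamma)^i\}$. Surrogate: $\Psi^{K,h}_{t,i}(M_{t-h:t}):=A_K^i\mathbf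 1_{i\le h}+\sum_{j=0}^hA_K^jBM_{t-j}^{[i-j-1]}\mathbf 1_{i-j\in[1,H]}$; $y_t:=\sum_{i=0}^{2H}\Psi^{K,H}_{t-1,i}(M_{t-1-H:t-1})w_{t-1-i}$; $v_t:=-Ky_t+\sum_{i=1}^HM_t^{[i-1]}w_{t-i}$; $F_t(M_{t-1-H:t}):=c_t(y_t,v_t)$. *)

theory Defs
  imports "HOL-Probability.Probability"
begin

(* Operator (spectral) norm of a matrix: norm of the induced linear map.
   Note: the Isabelle "norm" of a matrix of type real^'n^'m is its Frobenius norm. *)
definition opnorm :: "('a::real_normed_field)^'n^'m \<Rightarrow> real" where
  "opnorm A = onorm (\<lambda>x. A *v x)"

fun mpow :: "('a::semiring_1)^'n^'n \<Rightarrow> nat \<Rightarrow> 'a^'n^'n" where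
  "mpow A 0 = mat 1"
| "mpow A (Suc i) = A ** mpow A i"

definition cmat :: "real^'n^'m \<Rightarrow> complex^'n^'m" where
  "cmat A = (\<chi> i j. complex_of_real (A $ i $ j))"

definition kappaB :: "real^'m^'n \<Rightarrow> real" where
  "kappaB B = max (opnorm B) 1"

definition strongly_stable ::
  "real^'n^'n \<Rightarrow> real^'m^'n \<Rightarrow> real^'n^'m \<Rightarrow> real \<Rightarrow> real \<Rightarrow> bool" where
  "strongly_stable A B K \<kappa> \<gamma> \<longleftrightarrow>
     (\<exists>(P::complex^'n^'n) (Q::complex^'n^'n) Qi.
        Q ** Qi = mat 1 \<and> Qi ** Q = mat 1 \<and>
        cmat (A - B ** K) = Q ** P ** Qi \<and>
        opnorm P \<le> 1 - \<gamma> \<and> opnorm K \<le> \<kappa> \<and> opnorm Q \<le> \<kappa> \<and> opnorm Qi \<le> \<kappa>)"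

(* A disturbance-action parameter M = {M^[0],...,M^[H-1]} is a function nat => matrix,
   of which only the entries i < H are used. *)
definition frob :: "nat \<Rightarrow> (nat \<Rightarrow> real^'n^'m) \<Rightarrow> real" where
  "frob H M = sqrt (\<Sum>i<H. (norm (M i))\<^sup>2)"

definition Mset :: "nat \<Rightarrow> real \<Rightarrow> real \<Rightarrow> real \<Rightarrow> (nat \<Rightarrow> real^'n^'m) set" where
  "Mset H \<kappa>B \<kappa> \<gamma> = {M. \<forall>i<H. opnorm (M i) \<le> 2 * \<kappa>B * \<kappa>^3 * (1 - \<gamma>)^i}"

definition assumption_A1 :: "(nat \<Rightarrow> real^'n \<Rightarrow> real^'m \<Rightarrow> real) \<Rightarrow> real \<Rightarrow> bool" where
  "assumption_A1 c Gc \<longleftrightarrow> Gc \<ge> 1 \<and>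
     (\<forall>t. convex_on UNIV (\<lambda>p. c t (fst p) (snd p)) \<and>
       (\<forall>x u. \<exists>gx gu. ((\<lambda>p. c t (fst p) (snd p)) has_derivative
                         (\<lambda>h. gx \<bullet> fst h + gu \<bullet> snd h)) (at (x, u)) \<and>
                    norm gx \<le> Gc * norm x \<and> norm gu \<le> Gc * norm u))"

definition wext :: "(nat \<Rightarrow> 'a::zero) \<Rightarrow> int \<Rightarrow> 'a" where
  "wext w s = (if s < 0 then 0 else w (nat s))"

definition Psi :: "real^'n^'n \<Rightarrow> real^'m^'n \<Rightarrow> real^'n^'m \<Rightarrow> nat \<Rightarrow>
                   (int \<Rightarrow> nat \<Rightarrow> real^'n^'m) \<Rightarrow> int \<Rightarrow> nat \<Rightarrow> nat \<Rightarrow> real^'n^'n" where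
  "Psi A B K H M t h i =
     (if i \<le> h then mpow (A - B ** K) i else 0) +
     (\<Sum>j\<in>{0..h}. if j < i \<and> i - j \<le> H
                   then mpow (A - B ** K) j ** B ** M (t - int j) (i - j - 1) else 0)"

definition ysur :: "real^'n^'n \<Rightarrow> real^'m^'n \<Rightarrow> real^'n^'m \<Rightarrow> nat \<Rightarrow>
                   (int \<Rightarrow> nat \<Rightarrow> real^'n^'m) \<Rightarrow> (int \<Rightarrow> real^'n) \<Rightarrow> int \<Rightarrow> real^'n" where
  "ysur A B K H M w t = (\<Sum>i\<in>{0..2*H}. Psi A B K H M (t - 1) H i *v w (t - 1 - int i))"

definition vsur :: "real^'n^'n \<Rightarrow> real^'m^'n \<Rightarrow> real^'n^'m \<Rightarrow> nat \<Rightarrow>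
                   (int \<Rightarrow> nat \<Rightarrow> real^'n^'m) \<Rightarrow> (int \<Rightarrow> real^'n) \<Rightarrow> int \<Rightarrow> real^'m" where
  "vsur A B K H M w t = - (K *v ysur A B K H M w t) +
     (\<Sum>i\<in>{1..H}. M t (i - 1) *v w (t - int i))"

(* F_t(M_{t-1-H:t}) = c_t(y_t, v_t); depends only on M s for s in [t-1-H, t] *)
definition Fsur :: "(nat \<Rightarrow> real^'n \<Rightarrow> real^'m \<Rightarrow> real) \<Rightarrow> real^'n^'n \<Rightarrow> real^'m^'n \<Rightarrow>
                   real^'n^'m \<Rightarrow> nat \<Rightarrow> (int \<Rightarrow> nat \<Rightarrow> real^'n^'m) \<Rightarrow> (int \<Rightarrow> real^'n) \<Rightarrow> nat \<Rightarrow> real" where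
  "Fsur c A B K H M w t = c t (ysur A B K H M w (int t)) (vsur A B K H M w (int t))"

end

theory Submission
  imports Defs
begin

text \<open>
  Strong stability gives \<open>\<parallel>A\<^sub>K\<^sup>j\<parallel> \<le> \<kappa>\<^sup>2(1-\<gamma>)\<^sup>j\<close>, so every transfer matrix \<open>\<Psi>\<^sub>i\<close> is bounded by a weight
  whose sum over \<open>i\<close> is \<open>O(\<gamma>\<^sup>-\<^sup>2)\<close>, and replacing the single parameter \<open>M\<^sub>t\<^sub>-\<^sub>k\<close> changes each
  \<open>\<Psi>\<^sub>i\<close> in at most one summand. Hence the surrogate state and input are bounded by a fixed weighted
  sum \<open>U\<close> of past disturbance norms \<open>\<parallel>w\<^sub>s\<parallel>\<close>, and their changes by the Frobenius distance of the two
  parameters times the plain sum \<open>V\<close> of those norms. Convexity together with the gradient bounds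
  of A1 makes the cost Lipschitz with constant \<open>G\<^sub>c\<close> times the size of its arguments, so the change
  of \<open>F\<^sub>t\<close> is at most a constant times \<open>G\<^sub>c U V\<close> times that distance. Both \<open>U\<close> and \<open>V\<close> have expectation
  \<open>O(\<sigma>\<^sub>w)\<close> by A2(i), and Markov's inequality applied to each of them yields the claimed probability.
\<close>

lemma opnorm_nonneg: "0 \<le> opnorm X"
  for X :: "'a::{euclidean_space,real_normed_field}^'n^'m"
  unfolding opnorm_def by (rule onorm_pos_le) simp

lemma norm_mult_vec_le_opnorm: "norm (X *v x) \<le> opnorm X * norm x"
  for X :: "'a::{euclidean_space,real_normed_field}^'n^'m"
  unfolding opnorm_def by (rule onorm) simp

lemma norm_mult_vec_le_of_opnorm_le: "opnorm X \<le> b \<Longrightarrow> norm (X *v x) \<le> b * norm x"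
  for X :: "'a::{euclidean_space,real_normed_field}^'n^'m"
  by (meson norm_mult_vec_le_opnorm mult_right_mono norm_ge_zero order_trans)

lemma norm_mult_vec_le_norm: "norm (X *v x) \<le> norm X * norm x"
  for X :: "real^'n^'m"
proof -
  have row: "\<bar>(X *v x) $ i\<bar> \<le> norm (X $ i) * norm x" for i
    using Cauchy_Schwarz_ineq2 by (simp add: matrix_vector_mul_component)
  have "norm (X *v x) = L2_set (\<lambda>i. norm ((X *v x) $ i)) UNIV" by (simp add: norm_vec_def)
  also have "\<dots> \<le> L2_set (\<lambda>i. norm (X $ i) * norm x) UNIV"
    by (rule L2_set_mono) (use row in auto)
  also have "\<dots> = norm X * norm x"
    by (simp add: L2_set_left_distrib norm_vec_def)
  finally show ?thesis .
qed

lemma frob_nonneg: "0 \<le> frob H X"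
  unfolding frob_def by (simp add: sum_nonneg)

lemma norm_le_frob: "l < H \<Longrightarrow> norm (X l) \<le> frob H X"
  unfolding frob_def
  by (rule real_le_rsqrt, rule member_le_sum[of l "{..<H}" "\<lambda>i. (norm (X i))\<^sup>2"]) auto

lemma norm_mult_vec_le_frob: "l < H \<Longrightarrow> norm (X l *v x) \<le> frob H X * norm x"
  for X :: "nat \<Rightarrow> real^'n^'m"
  by (meson norm_le_frob norm_mult_vec_le_norm mult_right_mono norm_ge_zero order_trans)

lemma sum_matrix_vector_mult: "sum F S *v x = (\<Sum>j\<in>S. F j *v x)"
  by (induction S rule: infinite_finite_induct) (auto simp: matrix_vector_mult_add_rdistrib)

section \<open>Powers of a strongly stable closed loop\<close>

text \<open>The diagonalisation \<open>A\<^sub>K = QPQ\<^sup>-\<^sup>1\<close> is over \<open>\<complex>\<close>, so vectors are lifted by \<open>cvec\<close>, which is isometric.\<close>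

definition cvec :: "real^'n \<Rightarrow> complex^'n" where
  "cvec x = (\<chi> i. complex_of_real (x $ i))"

lemma cmat_mult: "cmat (X ** Y) = cmat X ** cmat Y"
  by (simp add: cmat_def matrix_matrix_mult_def vec_eq_iff)

lemma cmat_mat_1: "cmat (mat 1 :: real^'n^'n) = mat 1"
  by (simp add: cmat_def mat_def vec_eq_iff)

lemma cmat_mult_cvec: "cmat X *v cvec x = cvec (X *v x)"
  by (simp add: cmat_def cvec_def matrix_vector_mult_def vec_eq_iff)

lemma norm_cvec: "norm (cvec x) = norm x"
  by (simp add: norm_vec_def cvec_def)

lemma cmat_mpow:
  assumes "Q ** Qi = mat 1" "Qi ** Q = mat 1" "cmat X = Q ** P ** Qi"
  shows "cmat (mpow X j) = Q ** mpow P j ** Qi"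
proof (induction j)
  case 0
  then show ?case using assms by (simp add: cmat_mat_1)
next
  case (Suc j)
  have "cmat (mpow X (Suc j)) = (Q ** P ** Qi) ** (Q ** mpow P j ** Qi)"
    by (simp add: cmat_mult Suc.IH assms)
  also have "\<dots> = Q ** P ** (Qi ** Q) ** mpow P j ** Qi" by (simp add: matrix_mul_assoc)
  also have "\<dots> = Q ** mpow P (Suc j) ** Qi" by (simp add: assms matrix_mul_assoc)
  finally show ?case .
qed

lemma norm_mpow_mult_vec_le:
  fixes P :: "complex^'n^'n"
  assumes "opnorm P \<le> p"
  shows "norm (mpow P j *v z) \<le> p ^ j * norm z"
proof (induction j)
  case 0
  then show ?case by simp
next
  case (Suc j)
  have p: "0 \<le> p" using assms opnorm_nonneg[of P] by linarith
  have "norm (mpow P (Suc j) *v z) = norm (P *v (mpow P j *v z))"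
    by (simp add: matrix_vector_mul_assoc)
  also have "\<dots> \<le> p * norm (mpow P j *v z)" by (rule norm_mult_vec_le_of_opnorm_le[OF assms])
  also have "\<dots> \<le> p * (p ^ j * norm z)" by (rule mult_left_mono[OF Suc.IH p])
  finally show ?case by simp
qed

lemma strongly_stable_kappa_ge_1:
  fixes A :: "real^'n^'n" and B :: "real^'m^'n" and K :: "real^'n^'m"
  assumes "strongly_stable A B K \<kappa> \<gamma>"
  shows "1 \<le> \<kappa>"
proof -
  obtain Q Qi :: "complex^'n^'n" where h: "Q ** Qi = mat 1"
     "opnorm K \<le> \<kappa>" "opnorm Q \<le> \<kappa>" "opnorm Qi \<le> \<kappa>"
    using assms unfolding strongly_stable_def by blast
  have k0: "0 \<le> \<kappa>" using h(2) opnorm_nonneg[of K] by linarith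
  obtain i :: 'n where True by blast
  let ?x = "axis i (1::complex)"
  have "?x = Q *v (Qi *v ?x)" by (simp add: matrix_vector_mul_assoc h(1))
  then have "norm ?x \<le> \<kappa> * norm (Qi *v ?x)" by (metis norm_mult_vec_le_of_opnorm_le h(3))
  also have "\<dots> \<le> \<kappa> * (\<kappa> * norm ?x)"
    by (intro mult_left_mono norm_mult_vec_le_of_opnorm_le h(4) k0)
  finally have "1 \<le> \<kappa> * \<kappa>" by simp
  with k0 show ?thesis using mult_left_mono[of \<kappa> 1 \<kappa>] by force
qed

lemma strongly_stable_gamma_le_1:
  fixes A :: "real^'n^'n" and B :: "real^'m^'n" and K :: "real^'n^'m"
  assumes "strongly_stable A B K \<kappa> \<gamma>"
  shows "\<gamma> \<le> 1"
  using assms opnorm_nonneg unfolding strongly_stable_def by (meson diff_ge_0_iff_ge order_trans)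

lemma norm_K_mult_vec_le:
  "strongly_stable A B K \<kappa> \<gamma> \<Longrightarrow> norm (K *v x) \<le> \<kappa> * norm x"
  by (rule norm_mult_vec_le_of_opnorm_le) (auto simp: strongly_stable_def)

lemma norm_B_mult_vec_le: "norm (B *v x) \<le> kappaB B * norm x"
  by (rule norm_mult_vec_le_of_opnorm_le) (simp add: kappaB_def)

lemma kappaB_ge_1: "1 \<le> kappaB B"
  by (simp add: kappaB_def)

lemma Mset_mult_vec_le:
  "M \<in> Mset H kB \<kappa> \<gamma> \<Longrightarrow> l < H \<Longrightarrow> norm (M l *v x) \<le> 2 * kB * \<kappa>^3 * (1 - \<gamma>)^l * norm x"
  by (rule norm_mult_vec_le_of_opnorm_le) (simp add: Mset_def)

lemma strongly_stable_mpow_le: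
  fixes A :: "real^'n^'n" and B :: "real^'m^'n" and K :: "real^'n^'m"
  assumes "strongly_stable A B K \<kappa> \<gamma>"
  shows "norm (mpow (A - B ** K) j *v x) \<le> \<kappa>^2 * (1 - \<gamma>)^j * norm x"
proof -
  obtain P Q Qi :: "complex^'n^'n" where h: "Q ** Qi = mat 1" "Qi ** Q = mat 1"
     "cmat (A - B ** K) = Q ** P ** Qi" "opnorm P \<le> 1 - \<gamma>" "opnorm Q \<le> \<kappa>" "opnorm Qi \<le> \<kappa>"
    using assms unfolding strongly_stable_def by blast
  have k0: "0 \<le> \<kappa>" using strongly_stable_kappa_ge_1[OF assms] by simp
  have g0: "0 \<le> (1 - \<gamma>)^j" using strongly_stable_gamma_le_1[OF assms] by simp
  have "cvec (mpow (A - B ** K) j *v x) = (Q ** mpow P j ** Qi) *v cvec x"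
    by (simp only: cmat_mult_cvec[symmetric] cmat_mpow[OF h(1-3)])
  then have "norm (mpow (A - B ** K) j *v x) = norm (Q *v (mpow P j *v (Qi *v cvec x)))"
    by (metis norm_cvec matrix_vector_mul_assoc)
  also have "\<dots> \<le> \<kappa> * norm (mpow P j *v (Qi *v cvec x))"
    by (rule norm_mult_vec_le_of_opnorm_le[OF h(5)])
  also have "\<dots> \<le> \<kappa> * ((1 - \<gamma>)^j * norm (Qi *v cvec x))"
    by (intro mult_left_mono norm_mpow_mult_vec_le h(4) k0)
  also have "\<dots> \<le> \<kappa> * ((1 - \<gamma>)^j * (\<kappa> * norm x))"
    using norm_mult_vec_le_of_opnorm_le[OF h(6), of "cvec x"]
    by (intro mult_left_mono k0 g0) (simp_all add: norm_cvec)
  finally show ?thesis by (simp add: power2_eq_square mult_ac)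
qed

lemma strongly_stable_mpow_B_le:
  fixes A :: "real^'n^'n" and B :: "real^'m^'n" and K :: "real^'n^'m" and N :: "real^'a^'m"
  assumes stab: "strongly_stable A B K \<kappa> \<gamma>" and N: "norm (N *v x) \<le> b * norm x"
  shows "norm (mpow (A - B ** K) j ** B ** N *v x) \<le> \<kappa>^2 * (1 - \<gamma>)^j * kappaB B * b * norm x"
proof -
  have c0: "0 \<le> \<kappa>^2 * (1 - \<gamma>)^j" using strongly_stable_gamma_le_1[OF stab] by simp
  have "norm (mpow (A - B ** K) j ** B ** N *v x) = norm (mpow (A - B ** K) j *v (B *v (N *v x)))"
    by (simp only: matrix_vector_mul_assoc matrix_mul_assoc)
  also have "\<dots> \<le> \<kappa>^2 * (1 - \<gamma>)^j * norm (B *v (N *v x))"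
    by (rule strongly_stable_mpow_le[OF stab])
  also have "\<dots> \<le> \<kappa>^2 * (1 - \<gamma>)^j * (kappaB B * (b * norm x))"
    using kappaB_ge_1[of B] norm_B_mult_vec_le[of B "N *v x"] N
    by (intro mult_left_mono c0) (meson mult_left_mono order_trans zero_le_one order_trans)
  finally show ?thesis by (simp only: mult.assoc)
qed

section \<open>Bounds on the transfer matrices\<close>

definition psi_weight :: "real \<Rightarrow> real \<Rightarrow> real \<Rightarrow> nat \<Rightarrow> nat \<Rightarrow> real" where
  "psi_weight kB \<kappa> \<gamma> H i = (if i \<le> H then \<kappa>^2 * (1 - \<gamma>)^i else 0) +
     (\<Sum>j\<in>{0..H}. if j < i \<and> i - j \<le> H
                   then \<kappa>^2 * (1 - \<gamma>)^j * kB * (2 * kB * \<kappa>^3 * (1 - \<gamma>)^(i - j - 1)) else 0)"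

lemma psi_weight_nonneg: "0 \<le> kB \<Longrightarrow> 0 \<le> \<kappa> \<Longrightarrow> \<gamma> \<le> 1 \<Longrightarrow> 0 \<le> psi_weight kB \<kappa> \<gamma> H i"
  unfolding psi_weight_def by (intro add_nonneg_nonneg sum_nonneg) auto

lemma norm_Psi_mult_vec_le:
  fixes A :: "real^'n^'n" and B :: "real^'m^'n" and K :: "real^'n^'m"
    and M :: "int \<Rightarrow> nat \<Rightarrow> real^'n^'m"
  assumes stab: "strongly_stable A B K \<kappa> \<gamma>"
    and window: "\<And>j. j \<le> H \<Longrightarrow> M (s - int j) \<in> Mset H (kappaB B) \<kappa> \<gamma>"
  shows "norm (Psi A B K H M s H i *v x) \<le> psi_weight (kappaB B) \<kappa> \<gamma> H i * norm x"
proof -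
  let ?AK = "A - B ** K"
  let ?N = "\<lambda>j. M (s - int j) (i - j - 1)"
  have first: "norm ((if i \<le> H then mpow ?AK i else 0) *v x) \<le> (if i \<le> H then \<kappa>^2 * (1 - \<gamma>)^i else 0) * norm x"
    using strongly_stable_mpow_le[OF stab] by simp
  have summand: "norm ((if j < i \<and> i - j \<le> H then mpow ?AK j ** B ** ?N j else 0) *v x)
     \<le> (if j < i \<and> i - j \<le> H then \<kappa>^2 * (1 - \<gamma>)^j * kappaB B * (2 * kappaB B * \<kappa>^3 * (1 - \<gamma>)^(i - j - 1)) else 0) * norm x"
    if "j \<in> {0..H}" for j
  proof (cases "j < i \<and> i - j \<le> H")
    case True
    have "norm (?N j *v x) \<le> 2 * kappaB B * \<kappa>^3 * (1 - \<gamma>)^(i - j - 1) * norm x"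
      by (rule Mset_mult_vec_le[OF window]) (use that True in auto)
    from strongly_stable_mpow_B_le[OF stab this, of j] True show ?thesis by simp
  next
    case False
    then show ?thesis by (simp only: False if_False matrix_vector_mult_0 norm_zero mult_zero_left order_refl)
  qed
  have "norm (Psi A B K H M s H i *v x) = norm ((if i \<le> H then mpow ?AK i else 0) *v x +
      (\<Sum>j\<in>{0..H}. (if j < i \<and> i - j \<le> H then mpow ?AK j ** B ** ?N j else 0) *v x))"
    unfolding Psi_def by (simp only: matrix_vector_mult_add_rdistrib sum_matrix_vector_mult)
  also have "\<dots> \<le> norm ((if i \<le> H then mpow ?AK i else 0) *v x) +
      (\<Sum>j\<in>{0..H}. norm ((if j < i \<and> i - j \<le> H then mpow ?AK j ** B ** ?N j else 0) *v x))"
    by (rule order_trans[OF norm_triangle_ineq add_left_mono[OF norm_sum]])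
  also have "\<dots> \<le> psi_weight (kappaB B) \<kappa> \<gamma> H i * norm x"
    unfolding psi_weight_def distrib_right sum_distrib_right
    by (rule add_mono[OF first sum_mono[OF summand]])
  finally show ?thesis .
qed

lemma norm_sum_le_single_support:
  fixes f :: "'i \<Rightarrow> 'a::real_normed_vector"
  assumes "finite S" "\<And>j. j \<in> S \<Longrightarrow> j \<noteq> j0 \<Longrightarrow> f j = 0"
    and "\<And>j. j \<in> S \<Longrightarrow> norm (f j) \<le> b" "0 \<le> b"
  shows "norm (sum f S) \<le> b"
proof (cases "j0 \<in> S")
  case True
  then have "sum f S = f j0"
    using assms(1,2) by (simp add: sum.remove sum.neutral)
  then show ?thesis using assms(3) True by simp
next
  case False
  then have "sum f S = 0" using assms(2) by (intro sum.neutral) auto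
  then show ?thesis using assms(4) by simp
qed

text \<open>Replacing \<open>M\<^sub>e\<close> affects only the summand \<open>j = s - e\<close> of \<open>\<Psi>\<^sub>i\<close>.\<close>

lemma norm_Psi_update_diff_le:
  fixes A :: "real^'n^'n" and B :: "real^'m^'n" and K :: "real^'n^'m"
    and M :: "int \<Rightarrow> nat \<Rightarrow> real^'n^'m"
  assumes stab: "strongly_stable A B K \<kappa> \<gamma>" and \<gamma>: "0 \<le> \<gamma>"
    and D: "\<And>l x. l < H \<Longrightarrow> norm ((M e l - Mc l) *v x) \<le> D * norm x" "0 \<le> D"
  shows "norm (Psi A B K H M s H i *v x - Psi A B K H (M(e := Mc)) s H i *v x)
    \<le> \<kappa>^2 * kappaB B * D * norm x"
proof -
  let ?AK = "A - B ** K"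
  define T where "T N j = (if j < i \<and> i - j \<le> H then mpow ?AK j ** B ** N (s - int j) (i - j - 1) else 0) *v x"
    for N :: "int \<Rightarrow> nat \<Rightarrow> real^'n^'m" and j
  have expand: "Psi A B K H N s H i *v x = (if i \<le> H then mpow ?AK i else 0) *v x + (\<Sum>j\<in>{0..H}. T N j)" for N
    unfolding Psi_def T_def by (simp only: matrix_vector_mult_add_rdistrib sum_matrix_vector_mult)
  have unchanged: "T M j - T (M(e := Mc)) j = 0" if "j \<noteq> nat (s - e)" for j
    using that unfolding T_def by auto
  have changed: "norm (T M j - T (M(e := Mc)) j) \<le> \<kappa>^2 * kappaB B * D * norm x" for j
  proof (cases "s - int j = e \<and> j < i \<and> i - j \<le> H")
    case True
    have "T M j - T (M(e := Mc)) j = mpow ?AK j ** B ** (M e (i - j - 1) - Mc (i - j - 1)) *v x"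
      using True by (simp add: T_def matrix_vector_mul_assoc[symmetric] matrix_vector_mult_diff_distrib
          matrix_vector_mult_diff_rdistrib)
    also have "norm \<dots> \<le> \<kappa>^2 * (1 - \<gamma>)^j * kappaB B * D * norm x"
      by (rule strongly_stable_mpow_B_le[OF stab D(1)]) (use True in auto)
    also have "\<dots> \<le> \<kappa>^2 * 1 * kappaB B * D * norm x"
      using \<gamma> strongly_stable_gamma_le_1[OF stab] kappaB_ge_1[of B] D(2)
      by (intro mult_right_mono mult_left_mono power_le_one) auto
    finally show ?thesis by simp
  next
    case False
    then have "T M j - T (M(e := Mc)) j = 0" unfolding T_def by auto
    then show ?thesis using kappaB_ge_1[of B] D(2) by simp
  qed
  have "Psi A B K H M s H i *v x - Psi A B K H (M(e := Mc)) s H i *v x =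
        (\<Sum>j\<in>{0..H}. T M j - T (M(e := Mc)) j)"
    by (simp only: expand sum_subtractf) simp
  also have "norm \<dots> \<le> \<kappa>^2 * kappaB B * D * norm x"
    using unchanged changed kappaB_ge_1[of B] D(2) by (intro norm_sum_le_single_support) auto
  finally show ?thesis .
qed

lemma sum_power_le_geometric:
  assumes "0 \<le> (r::real)" "r < 1" "finite F"
  shows "(\<Sum>l\<in>F. r^l) \<le> 1 / (1 - r)"
proof -
  obtain n where n: "F \<subseteq> {..<n}" using assms(3) finite_nat_iff_bounded by blast
  have "(\<Sum>l\<in>F. r^l) \<le> (\<Sum>l<n. r^l)"
    by (rule sum_mono2) (use n assms in auto)
  also have "\<dots> = (1 - r^n) / (1 - r)" using assms by (simp add: sum_gp_strict)
  also have "\<dots> \<le> 1 / (1 - r)" using assms by (simp add: divide_right_mono)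
  finally show ?thesis .
qed

lemma sum_power_inj_le_geometric:
  assumes "0 \<le> (r::real)" "r < 1" "finite F" "inj_on f F"
  shows "(\<Sum>i\<in>F. r^(f i)) \<le> 1 / (1 - r)"
  using sum_power_le_geometric[of r "f ` F"] assms by (simp add: sum.reindex)

lemma sum_shifted_power_le_geometric:
  assumes "0 \<le> (r::real)" "r < 1" "finite I"
  shows "(\<Sum>i\<in>I. if j < i \<and> P i then r^(i - j - 1) else 0) \<le> 1 / (1 - r)"
proof -
  have "(\<Sum>i\<in>I. if j < i \<and> P i then r^(i - j - 1) else 0) = (\<Sum>i\<in>{i\<in>I. j < i \<and> P i}. r^(i - j - 1))"
    by (rule sum.inter_filter[symmetric]) (use assms in simp)
  also have "\<dots> \<le> 1 / (1 - r)"
    by (rule sum_power_inj_le_geometric) (use assms in \<open>auto simp: inj_on_def\<close>)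
  finally show ?thesis .
qed

lemma sum_psi_weight_le:
  assumes \<gamma>: "0 < \<gamma>" "\<gamma> < 1" and kB: "0 \<le> kB" and \<kappa>: "0 \<le> \<kappa>"
  shows "(\<Sum>i\<in>{0..2*H}. psi_weight kB \<kappa> \<gamma> H i) \<le> \<kappa>^2 / \<gamma> + 2 * kB^2 * \<kappa>^5 / \<gamma>^2"
proof -
  let ?r = "1 - \<gamma>"
  have r: "0 \<le> ?r" "?r < 1" using \<gamma> by auto
  have geo: "(\<Sum>l\<in>F. ?r^l) \<le> 1 / \<gamma>" if "finite F" for F
    using sum_power_le_geometric[OF r that] by simp
  have direct: "(\<Sum>i\<in>{0..2*H}. if i \<le> H then \<kappa>^2 * ?r^i else 0) \<le> \<kappa>^2 / \<gamma>"
  proof -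
    have "(\<Sum>i\<in>{0..2*H}. if i \<le> H then \<kappa>^2 * ?r^i else 0) \<le> \<kappa>^2 * (\<Sum>i\<in>{0..2*H}. ?r^i)"
      unfolding sum_distrib_left by (rule sum_mono) (use r in auto)
    also have "\<dots> \<le> \<kappa>^2 * (1 / \<gamma>)" by (intro mult_left_mono geo) auto
    finally show ?thesis by simp
  qed
  have inner: "(\<Sum>i\<in>{0..2*H}. if j < i \<and> i - j \<le> H then ?r^(i - j - 1) else 0) \<le> 1 / \<gamma>" for j
    using sum_shifted_power_le_geometric[OF r, of "{0..2*H}" j "\<lambda>i. i - j \<le> H"] by simp
  have factor: "(if j < i \<and> i - j \<le> H then \<kappa>^2 * ?r^j * kB * (2 * kB * \<kappa>^3 * ?r^(i - j - 1)) else 0)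
      = (2 * kB^2 * \<kappa>^5 * ?r^j) * (if j < i \<and> i - j \<le> H then ?r^(i - j - 1) else 0)" for i j
    by (simp add: power2_eq_square power3_eq_cube eval_nat_numeral)
  have convolution: "(\<Sum>i\<in>{0..2*H}. \<Sum>j\<in>{0..H}. if j < i \<and> i - j \<le> H
        then \<kappa>^2 * ?r^j * kB * (2 * kB * \<kappa>^3 * ?r^(i - j - 1)) else 0) \<le> 2 * kB^2 * \<kappa>^5 / \<gamma>^2"
  proof -
    have "(\<Sum>i\<in>{0..2*H}. \<Sum>j\<in>{0..H}. if j < i \<and> i - j \<le> H
          then \<kappa>^2 * ?r^j * kB * (2 * kB * \<kappa>^3 * ?r^(i - j - 1)) else 0)
       = (\<Sum>j\<in>{0..H}. (2 * kB^2 * \<kappa>^5 * ?r^j) * (\<Sum>i\<in>{0..2*H}. if j < i \<and> i - j \<le> H then ?r^(i - j - 1) else 0))"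
      by (subst sum.swap) (simp only: factor sum_distrib_left)
    also have "\<dots> \<le> (\<Sum>j\<in>{0..H}. (2 * kB^2 * \<kappa>^5 * ?r^j) * (1 / \<gamma>))"
      by (intro sum_mono mult_left_mono inner) (use kB \<kappa> r in auto)
    also have "\<dots> = 2 * kB^2 * \<kappa>^5 / \<gamma> * (\<Sum>j\<in>{0..H}. ?r^j)"
      by (simp only: sum_distrib_left) (simp add: mult_ac)
    also have "\<dots> \<le> 2 * kB^2 * \<kappa>^5 / \<gamma> * (1 / \<gamma>)"
      using kB \<kappa> \<gamma> by (intro mult_left_mono geo) auto
    finally show ?thesis by (simp add: power2_eq_square)
  qed
  show ?thesis
    using direct convolution unfolding psi_weight_def sum.distrib by linarith
qed

section \<open>Disturbance envelopes of the surrogate state and input\<close>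

definition state_envelope :: "real \<Rightarrow> real \<Rightarrow> real \<Rightarrow> nat \<Rightarrow> (int \<Rightarrow> real^'n) \<Rightarrow> int \<Rightarrow> real" where
  "state_envelope kB \<kappa> \<gamma> H z s = (\<Sum>i\<in>{0..2*H}. psi_weight kB \<kappa> \<gamma> H i * norm (z (s - 1 - int i)))"

definition input_envelope :: "real \<Rightarrow> real \<Rightarrow> real \<Rightarrow> nat \<Rightarrow> (int \<Rightarrow> real^'n) \<Rightarrow> int \<Rightarrow> real" where
  "input_envelope kB \<kappa> \<gamma> H z s = \<kappa> * state_envelope kB \<kappa> \<gamma> H z s +
     (\<Sum>i\<in>{1..H}. 2 * kB * \<kappa>^3 * (1 - \<gamma>)^(i - 1) * norm (z (s - int i)))"

definition disturbance_mass :: "nat \<Rightarrow> (int \<Rightarrow> real^'n) \<Rightarrow> int \<Rightarrow> real" where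
  "disturbance_mass H z s = (\<Sum>i\<in>{0..2*H}. norm (z (s - 1 - int i))) + (\<Sum>i\<in>{1..H}. norm (z (s - int i)))"

lemma disturbance_mass_nonneg: "0 \<le> disturbance_mass H z s"
  unfolding disturbance_mass_def by (intro add_nonneg_nonneg sum_nonneg) auto

lemma state_envelope_le_input_envelope:
  assumes "0 \<le> kB" "1 \<le> \<kappa>" "\<gamma> \<le> 1"
  shows "0 \<le> state_envelope kB \<kappa> \<gamma> H z s"
    and "state_envelope kB \<kappa> \<gamma> H z s \<le> input_envelope kB \<kappa> \<gamma> H z s"
proof -
  show nonneg: "0 \<le> state_envelope kB \<kappa> \<gamma> H z s"
    unfolding state_envelope_def using assms psi_weight_nonneg
    by (intro sum_nonneg mult_nonneg_nonneg) auto
  have "0 \<le> (\<Sum>i\<in>{1..H}. 2 * kB * \<kappa>^3 * (1 - \<gamma>)^(i - 1) * norm (z (s - int i)))"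
    using assms by (intro sum_nonneg mult_nonneg_nonneg) auto
  moreover have "state_envelope kB \<kappa> \<gamma> H z s \<le> \<kappa> * state_envelope kB \<kappa> \<gamma> H z s"
    using mult_right_mono[OF assms(2) nonneg] by simp
  ultimately show "state_envelope kB \<kappa> \<gamma> H z s \<le> input_envelope kB \<kappa> \<gamma> H z s"
    unfolding input_envelope_def by linarith
qed

lemma input_envelope_nonneg:
  "0 \<le> kB \<Longrightarrow> 1 \<le> \<kappa> \<Longrightarrow> \<gamma> \<le> 1 \<Longrightarrow> 0 \<le> input_envelope kB \<kappa> \<gamma> H z s"
  using state_envelope_le_input_envelope[of kB \<kappa> \<gamma> H z s] by linarith

lemma norm_ysur_le:
  fixes A :: "real^'n^'n" and B :: "real^'m^'n" and K :: "real^'n^'m"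
    and M :: "int \<Rightarrow> nat \<Rightarrow> real^'n^'m"
  assumes stab: "strongly_stable A B K \<kappa> \<gamma>"
    and window: "\<And>j. j \<le> H \<Longrightarrow> M (s - 1 - int j) \<in> Mset H (kappaB B) \<kappa> \<gamma>"
  shows "norm (ysur A B K H M z s) \<le> state_envelope (kappaB B) \<kappa> \<gamma> H z s"
  unfolding ysur_def state_envelope_def
  by (rule order_trans[OF norm_sum sum_mono], rule norm_Psi_mult_vec_le[OF stab])
     (use window in auto)

lemma norm_vsur_le:
  fixes A :: "real^'n^'n" and B :: "real^'m^'n" and K :: "real^'n^'m"
    and M :: "int \<Rightarrow> nat \<Rightarrow> real^'n^'m"
  assumes stab: "strongly_stable A B K \<kappa> \<gamma>"
    and window: "\<And>j. j \<le> H \<Longrightarrow> M (s - 1 - int j) \<in> Mset H (kappaB B) \<kappa> \<gamma>"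
    and current: "M s \<in> Mset H (kappaB B) \<kappa> \<gamma>"
  shows "norm (vsur A B K H M z s) \<le> input_envelope (kappaB B) \<kappa> \<gamma> H z s"
proof -
  have \<kappa>: "0 \<le> \<kappa>" using strongly_stable_kappa_ge_1[OF stab] by simp
  have "norm (vsur A B K H M z s) \<le> norm (K *v ysur A B K H M z s) + norm (\<Sum>i\<in>{1..H}. M s (i - 1) *v z (s - int i))"
    unfolding vsur_def
    by (rule order_trans[OF norm_triangle_ineq add_mono[OF eq_refl[OF norm_minus_cancel] order_refl]])
  also have "\<dots> \<le> \<kappa> * state_envelope (kappaB B) \<kappa> \<gamma> H z s +
      (\<Sum>i\<in>{1..H}. 2 * kappaB B * \<kappa>^3 * (1 - \<gamma>)^(i - 1) * norm (z (s - int i)))"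
  proof (rule add_mono)
    show "norm (K *v ysur A B K H M z s) \<le> \<kappa> * state_envelope (kappaB B) \<kappa> \<gamma> H z s"
      using norm_K_mult_vec_le[OF stab] norm_ysur_le[where M=M and s=s, OF stab window] \<kappa>
      by (meson mult_left_mono order_trans)
    show "norm (\<Sum>i\<in>{1..H}. M s (i - 1) *v z (s - int i)) \<le>
        (\<Sum>i\<in>{1..H}. 2 * kappaB B * \<kappa>^3 * (1 - \<gamma>)^(i - 1) * norm (z (s - int i)))"
      by (rule order_trans[OF norm_sum sum_mono], rule Mset_mult_vec_le[OF current]) auto
  qed
  finally show ?thesis unfolding input_envelope_def .
qed

lemma norm_ysur_update_diff_le:
  fixes A :: "real^'n^'n" and B :: "real^'m^'n" and K :: "real^'n^'m"
    and M :: "int \<Rightarrow> nat \<Rightarrow> real^'n^'m"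
  assumes stab: "strongly_stable A B K \<kappa> \<gamma>" and \<gamma>: "0 \<le> \<gamma>"
    and D: "\<And>l x. l < H \<Longrightarrow> norm ((M e l - Mc l) *v x) \<le> D * norm x" "0 \<le> D"
  shows "norm (ysur A B K H M z s - ysur A B K H (M(e := Mc)) z s)
    \<le> \<kappa>^2 * kappaB B * D * (\<Sum>i\<in>{0..2*H}. norm (z (s - 1 - int i)))"
proof -
  have "norm (ysur A B K H M z s - ysur A B K H (M(e := Mc)) z s) =
     norm (\<Sum>i\<in>{0..2*H}. Psi A B K H M (s - 1) H i *v z (s - 1 - int i)
                     - Psi A B K H (M(e := Mc)) (s - 1) H i *v z (s - 1 - int i))"
    unfolding ysur_def by (simp only: sum_subtractf)
  also have "\<dots> \<le> (\<Sum>i\<in>{0..2*H}. \<kappa>^2 * kappaB B * D * norm (z (s - 1 - int i)))"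
    by (rule order_trans[OF norm_sum sum_mono], rule norm_Psi_update_diff_le[where M=M and e=e and Mc=Mc and D=D, OF stab \<gamma> D])
  finally show ?thesis by (simp only: sum_distrib_left)
qed

lemma norm_vsur_update_diff_le:
  fixes A :: "real^'n^'n" and B :: "real^'m^'n" and K :: "real^'n^'m"
    and M :: "int \<Rightarrow> nat \<Rightarrow> real^'n^'m"
  assumes stab: "strongly_stable A B K \<kappa> \<gamma>"
    and D: "\<And>l x. l < H \<Longrightarrow> norm ((M e l - Mc l) *v x) \<le> D * norm x" "0 \<le> D"
  shows "norm (vsur A B K H M z s - vsur A B K H (M(e := Mc)) z s) \<le>
     \<kappa> * norm (ysur A B K H M z s - ysur A B K H (M(e := Mc)) z s) + D * (\<Sum>i\<in>{1..H}. norm (z (s - int i)))"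
proof -
  let ?y = "ysur A B K H M z s" and ?y' = "ysur A B K H (M(e := Mc)) z s"
  let ?\<delta> = "\<lambda>i. M s (i - 1) *v z (s - int i) - (M(e := Mc)) s (i - 1) *v z (s - int i)"
  have "norm (vsur A B K H M z s - vsur A B K H (M(e := Mc)) z s)
      = norm (- (K *v (?y - ?y')) + (\<Sum>i\<in>{1..H}. ?\<delta> i))"
    unfolding vsur_def by (simp add: sum_subtractf matrix_vector_mult_diff_distrib algebra_simps)
  also have "\<dots> \<le> norm (K *v (?y - ?y')) + (\<Sum>i\<in>{1..H}. norm (?\<delta> i))"
    by (rule order_trans[OF norm_triangle_ineq add_mono[OF eq_refl[OF norm_minus_cancel] norm_sum]])
  also have "\<dots> \<le> \<kappa> * norm (?y - ?y') + (\<Sum>i\<in>{1..H}. D * norm (z (s - int i)))"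
  proof (rule add_mono[OF norm_K_mult_vec_le[OF stab] sum_mono])
    fix i assume i: "i \<in> {1..H}"
    show "norm (?\<delta> i) \<le> D * norm (z (s - int i))"
    proof (cases "s = e")
      case True
      have "i - 1 < H" using i by auto
      from D(1)[OF this, of "z (s - int i)"] True show ?thesis
        by (simp add: matrix_vector_mult_diff_rdistrib)
    next
      case False
      then show ?thesis using D(2) by simp
    qed
  qed
  finally show ?thesis by (simp only: sum_distrib_left)
qed

lemma surrogate_update_diff_le:
  fixes A :: "real^'n^'n" and B :: "real^'m^'n" and K :: "real^'n^'m"
    and M :: "int \<Rightarrow> nat \<Rightarrow> real^'n^'m"
  assumes stab: "strongly_stable A B K \<kappa> \<gamma>" and \<gamma>: "0 \<le> \<gamma>"
    and D: "\<And>l x. l < H \<Longrightarrow> norm ((M e l - Mc l) *v x) \<le> D * norm x" "0 \<le> D"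
  shows "norm (ysur A B K H M z s - ysur A B K H (M(e := Mc)) z s)
       + norm (vsur A B K H M z s - vsur A B K H (M(e := Mc)) z s)
     \<le> 2 * \<kappa>^3 * kappaB B * D * disturbance_mass H z s"
proof -
  let ?dy = "norm (ysur A B K H M z s - ysur A B K H (M(e := Mc)) z s)"
  let ?dv = "norm (vsur A B K H M z s - vsur A B K H (M(e := Mc)) z s)"
  define S0 where "S0 = (\<Sum>i\<in>{0..2*H}. norm (z (s - 1 - int i)))"
  define S1 where "S1 = (\<Sum>i\<in>{1..H}. norm (z (s - int i)))"
  define W where "W = \<kappa>^3 * kappaB B * D"
  have \<kappa>: "1 \<le> \<kappa>" by (rule strongly_stable_kappa_ge_1[OF stab])
  have S: "0 \<le> S0" "0 \<le> S1" unfolding S0_def S1_def by (auto intro: sum_nonneg)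
  have "1 \<le> \<kappa>^3 * kappaB B"
    using mult_mono[of 1 "\<kappa>^3" 1 "kappaB B"] one_le_power[OF \<kappa>, of 3] kappaB_ge_1[of B] \<kappa> by simp
  from mult_right_mono[OF this D(2)] have DW: "D \<le> W" by (simp add: W_def)
  have \<kappa>W: "\<kappa>^2 * kappaB B * D \<le> W"
    unfolding W_def using \<kappa> kappaB_ge_1[of B] D(2)
    by (intro mult_right_mono power_increasing) auto
  have dy: "?dy \<le> \<kappa>^2 * kappaB B * D * S0"
    unfolding S0_def by (rule norm_ysur_update_diff_le[where M=M and e=e and Mc=Mc and D=D, OF stab \<gamma> D])
  have "\<kappa> * ?dy \<le> \<kappa> * (\<kappa>^2 * kappaB B * D * S0)"
    using dy \<kappa> by (intro mult_left_mono) auto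
  also have "\<dots> = W * S0" by (simp add: W_def power2_eq_square power3_eq_cube)
  finally have \<kappa>dy: "\<kappa> * ?dy \<le> W * S0" .
  have dv: "?dv \<le> \<kappa> * ?dy + D * S1" unfolding S1_def
    by (rule norm_vsur_update_diff_le[where M=M and e=e and Mc=Mc and D=D, OF stab D])
  have "?dy \<le> W * S0" using dy mult_right_mono[OF \<kappa>W S(1)] by linarith
  moreover have "?dv \<le> W * S0 + W * S1" using dv \<kappa>dy mult_right_mono[OF DW S(2)] by linarith
  moreover have "0 \<le> W * S1" using DW D(2) S(2) by simp
  ultimately have "?dy + ?dv \<le> 2 * W * (S0 + S1)" by (simp add: algebra_simps)
  then show ?thesis unfolding disturbance_mass_def S0_def[symmetric] S1_def[symmetric] W_def
    by (simp add: mult_ac)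
qed

section \<open>Lipschitz bound for the cost\<close>

lemma convex_on_has_derivative_le:
  fixes f :: "'a::real_normed_vector \<Rightarrow> real"
  assumes convex: "convex_on UNIV f" and deriv: "(f has_derivative D) (at p)"
  shows "D (q - p) \<le> f q - f p"
proof -
  define \<phi> where "\<phi> s = f (p + s *\<^sub>R (q - p))" for s :: real
  have "convex_on UNIV \<phi>"
  proof (rule convex_onI)
    fix t x y :: real assume t: "0 < t" "t < 1"
    have segment: "p + ((1 - t) *\<^sub>R x + t *\<^sub>R y) *\<^sub>R (q - p)
        = (1 - t) *\<^sub>R (p + x *\<^sub>R (q - p)) + t *\<^sub>R (p + y *\<^sub>R (q - p))"
      by (simp add: algebra_simps)
    show "\<phi> ((1 - t) *\<^sub>R x + t *\<^sub>R y) \<le> (1 - t) * \<phi> x + t * \<phi> y"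
      unfolding \<phi>_def segment using t by (intro convex_onD[OF convex]) auto
  qed simp
  moreover have "(\<phi> has_field_derivative D (q - p)) (at 0)"
  proof -
    have "((\<lambda>s. p + s *\<^sub>R (q - p)) has_derivative (\<lambda>s. s *\<^sub>R (q - p))) (at 0)"
      by (auto intro!: derivative_eq_intros)
    from has_derivative_compose[OF this, of f D] deriv
    have "(\<phi> has_derivative (\<lambda>s. D (s *\<^sub>R (q - p)))) (at 0)"
      unfolding \<phi>_def by (simp add: o_def)
    moreover have "D (s *\<^sub>R (q - p)) = s * D (q - p)" for s
      using has_derivative_bounded_linear[OF deriv] by (simp add: linear_simps)
    ultimately show ?thesis
      by (simp add: has_field_derivative_def mult.commute[of _ "D (q - p)"])
  qed
  ultimately have "D (q - p) * (1 - 0) \<le> \<phi> 1 - \<phi> 0"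
    by (intro convex_on_imp_above_tangent) auto
  then show ?thesis by (simp add: \<phi>_def)
qed

text \<open>Each one-sided difference \<open>c q - c p\<close> is bounded via the tangent at \<open>q\<close>, so the gradient bounds
  of A1 only need the common size bound \<open>r\<close>.\<close>

lemma assumption_A1_lipschitz:
  assumes A1: "assumption_A1 c Gc"
    and r: "norm x \<le> r" "norm x' \<le> r" "norm u \<le> r" "norm u' \<le> r"
  shows "\<bar>c t x u - c t x' u'\<bar> \<le> Gc * r * (norm (x - x') + norm (u - u'))"
proof -
  let ?f = "\<lambda>p. c t (fst p) (snd p)"
  have convex: "convex_on UNIV ?f" and Gc: "0 \<le> Gc"
    using A1 unfolding assumption_A1_def by auto
  have one_side: "?f q - ?f p \<le> Gc * r * (norm (fst q - fst p) + norm (snd q - snd p))"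
    if "norm (fst q) \<le> r" "norm (snd q) \<le> r" for p q
  proof -
    have "\<exists>gx gu. (?f has_derivative (\<lambda>h. gx \<bullet> fst h + gu \<bullet> snd h)) (at (fst q, snd q)) \<and>
        norm gx \<le> Gc * norm (fst q) \<and> norm gu \<le> Gc * norm (snd q)"
      using A1 unfolding assumption_A1_def by blast
    then obtain gx gu where g: "(?f has_derivative (\<lambda>h. gx \<bullet> fst h + gu \<bullet> snd h)) (at q)"
        "norm gx \<le> Gc * norm (fst q)" "norm gu \<le> Gc * norm (snd q)"
      by auto
    have "norm gx \<le> Gc * r" "norm gu \<le> Gc * r"
      using g(2,3) that Gc by (meson mult_left_mono order_trans)+
    then have "- (gx \<bullet> (fst p - fst q) + gu \<bullet> (snd p - snd q))
        \<le> Gc * r * norm (fst q - fst p) + Gc * r * norm (snd q - snd p)"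
      using Cauchy_Schwarz_ineq2[of gx "fst p - fst q"] Cauchy_Schwarz_ineq2[of gu "snd p - snd q"]
        mult_right_mono[of "norm gx" "Gc * r" "norm (fst q - fst p)"]
        mult_right_mono[of "norm gu" "Gc * r" "norm (snd q - snd p)"]
      by (simp add: norm_minus_commute)
    moreover have "gx \<bullet> (fst p - fst q) + gu \<bullet> (snd p - snd q) \<le> ?f p - ?f q"
      using convex_on_has_derivative_le[OF convex g(1), of p] by simp
    ultimately show ?thesis by (simp add: distrib_left)
  qed
  show ?thesis
    using one_side[of "(x', u')" "(x, u)"] one_side[of "(x, u)" "(x', u')"] r
    by (simp add: norm_minus_commute)
qed

lemma Fsur_update_diff_le:
  fixes A :: "real^'n^'n" and B :: "real^'m^'n" and K :: "real^'n^'m"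
    and M :: "int \<Rightarrow> nat \<Rightarrow> real^'n^'m" and Mc :: "nat \<Rightarrow> real^'n^'m"
  assumes A1: "assumption_A1 c Gc" and stab: "strongly_stable A B K \<kappa> \<gamma>" and \<gamma>: "0 \<le> \<gamma>"
    and window: "\<And>s. int t - 1 - int H \<le> s \<Longrightarrow> s \<le> int t \<Longrightarrow> M s \<in> Mset H (kappaB B) \<kappa> \<gamma>"
    and Mc: "Mc \<in> Mset H (kappaB B) \<kappa> \<gamma>"
  shows "\<bar>Fsur c A B K H M z t - Fsur c A B K H (M(e := Mc)) z t\<bar>
    \<le> 2 * Gc * \<kappa>^3 * kappaB B * frob H (\<lambda>i. M e i - Mc i)
       * input_envelope (kappaB B) \<kappa> \<gamma> H z (int t) * disturbance_mass H z (int t)"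
proof -
  let ?M' = "M(e := Mc)" and ?E = "input_envelope (kappaB B) \<kappa> \<gamma> H z (int t)"
  let ?D = "frob H (\<lambda>i. M e i - Mc i)"
  have \<kappa>: "1 \<le> \<kappa>" by (rule strongly_stable_kappa_ge_1[OF stab])
  have \<gamma>1: "\<gamma> \<le> 1" by (rule strongly_stable_gamma_le_1[OF stab])
  have kB: "0 \<le> kappaB B" using kappaB_ge_1[of B] by simp
  have E: "0 \<le> ?E" "state_envelope (kappaB B) \<kappa> \<gamma> H z (int t) \<le> ?E"
    using input_envelope_nonneg[OF kB \<kappa> \<gamma>1] state_envelope_le_input_envelope(2)[OF kB \<kappa> \<gamma>1] by auto
  have bounded: "norm (ysur A B K H N z (int t)) \<le> ?E \<and> norm (vsur A B K H N z (int t)) \<le> ?E"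
    if "\<And>s. int t - 1 - int H \<le> s \<Longrightarrow> s \<le> int t \<Longrightarrow> N s \<in> Mset H (kappaB B) \<kappa> \<gamma>" for N
  proof -
    have "N (int t - 1 - int j) \<in> Mset H (kappaB B) \<kappa> \<gamma>" if "j \<le> H" for j
      using that by (intro \<open>\<And>s. _ \<Longrightarrow> _ \<Longrightarrow> N s \<in> _\<close>) auto
    moreover have "N (int t) \<in> Mset H (kappaB B) \<kappa> \<gamma>" by (intro \<open>\<And>s. _ \<Longrightarrow> _ \<Longrightarrow> N s \<in> _\<close>) auto
    ultimately show ?thesis
      using norm_ysur_le[OF stab, of H N "int t" z] norm_vsur_le[OF stab, of H N "int t" z] E(2) by auto
  qed
  have window': "?M' s \<in> Mset H (kappaB B) \<kappa> \<gamma>" if "int t - 1 - int H \<le> s" "s \<le> int t" for s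
    using window[OF that] Mc by simp
  have D: "norm ((M e l - Mc l) *v x) \<le> ?D * norm x" if "l < H" for l x
    using norm_mult_vec_le_frob[OF that, of "\<lambda>i. M e i - Mc i"] by simp
  have D0: "0 \<le> ?D" by (rule frob_nonneg)
  have Gc: "0 \<le> Gc" using A1 by (simp add: assumption_A1_def)
  have "\<bar>Fsur c A B K H M z t - Fsur c A B K H ?M' z t\<bar>
      \<le> Gc * ?E * (norm (ysur A B K H M z (int t) - ysur A B K H ?M' z (int t))
                  + norm (vsur A B K H M z (int t) - vsur A B K H ?M' z (int t)))"
    unfolding Fsur_def
    using bounded[of M, OF window] bounded[of ?M', OF window'] by (intro assumption_A1_lipschitz[OF A1]) auto
  also have "\<dots> \<le> Gc * ?E * (2 * \<kappa>^3 * kappaB B * ?D * disturbance_mass H z (int t))"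
    using Gc E(1) by (intro mult_left_mono surrogate_update_diff_le[where M=M and e=e and Mc=Mc, OF stab \<gamma> D D0]) auto
  finally show ?thesis by (simp add: mult_ac)
qed

section \<open>Measurability and expectations\<close>

lemma borel_measurable_matrix_vector_mult [measurable (raw)]:
  fixes X :: "real^'n^'m"
  shows "f \<in> borel_measurable M \<Longrightarrow> (\<lambda>x. X *v f x) \<in> borel_measurable M"
  by (rule borel_measurable_continuous_on[where f="\<lambda>v. X *v v"])
     (auto intro!: linear_continuous_on)

lemma borel_measurable_wext:
  assumes "\<And>s. w s \<in> borel_measurable M"
  shows "(\<lambda>\<omega>. wext (\<lambda>r. w r \<omega>) s) \<in> borel_measurable M"
  unfolding wext_def using assms by (cases "s < 0") auto

lemma borel_measurable_ysur:
  fixes A :: "real^'n^'n" and B :: "real^'m^'n" and K :: "real^'n^'m"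
  assumes "\<And>s. w s \<in> borel_measurable \<Omega>"
  shows "(\<lambda>\<omega>. ysur A B K H M (wext (\<lambda>r. w r \<omega>)) s) \<in> borel_measurable \<Omega>"
  unfolding ysur_def
  by (intro borel_measurable_sum borel_measurable_matrix_vector_mult borel_measurable_wext assms)

lemma borel_measurable_vsur:
  fixes A :: "real^'n^'n" and B :: "real^'m^'n" and K :: "real^'n^'m"
  assumes "\<And>s. w s \<in> borel_measurable \<Omega>"
  shows "(\<lambda>\<omega>. vsur A B K H M (wext (\<lambda>r. w r \<omega>)) s) \<in> borel_measurable \<Omega>"
  unfolding vsur_def
  by (intro borel_measurable_add borel_measurable_uminus borel_measurable_sum
      borel_measurable_matrix_vector_mult borel_measurable_wext borel_measurable_ysur assms)

lemma assumption_A1_continuous_on: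
  fixes c :: "nat \<Rightarrow> real^'n \<Rightarrow> real^'m \<Rightarrow> real"
  assumes "assumption_A1 c Gc"
  shows "continuous_on UNIV (\<lambda>p. c t (fst p) (snd p))"
proof (rule continuous_at_imp_continuous_on, intro ballI)
  fix p :: "(real^'n) \<times> (real^'m)"
  obtain gx gu where "((\<lambda>p. c t (fst p) (snd p)) has_derivative (\<lambda>h. gx \<bullet> fst h + gu \<bullet> snd h)) (at (fst p, snd p))"
    using assms unfolding assumption_A1_def by blast
  then show "isCont (\<lambda>p. c t (fst p) (snd p)) p" using has_derivative_continuous by simp
qed

lemma borel_measurable_Fsur:
  fixes A :: "real^'n^'n" and B :: "real^'m^'n" and K :: "real^'n^'m"
  assumes "\<And>s. w s \<in> borel_measurable \<Omega>" and "assumption_A1 c Gc"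
  shows "(\<lambda>\<omega>. Fsur c A B K H M (wext (\<lambda>r. w r \<omega>)) t) \<in> borel_measurable \<Omega>"
proof -
  have "(\<lambda>\<omega>. (ysur A B K H M (wext (\<lambda>r. w r \<omega>)) (int t), vsur A B K H M (wext (\<lambda>r. w r \<omega>)) (int t)))
      \<in> borel_measurable \<Omega>"
    unfolding borel_prod[symmetric]
    by (intro measurable_Pair borel_measurable_ysur borel_measurable_vsur assms(1))
  from borel_measurable_continuous_on[OF assumption_A1_continuous_on[OF assms(2)] this]
  show ?thesis unfolding Fsur_def by simp
qed

lemma integral_weighted_sum_le:
  fixes f :: "'i \<Rightarrow> 'w \<Rightarrow> real"
  assumes "finite I" and f: "\<And>i. i \<in> I \<Longrightarrow> integrable \<Omega> (f i)" "\<And>i. i \<in> I \<Longrightarrow> integral\<^sup>L \<Omega> (f i) \<le> \<sigma>"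
    and a: "\<And>i. i \<in> I \<Longrightarrow> 0 \<le> a i"
  shows "integrable \<Omega> (\<lambda>\<omega>. \<Sum>i\<in>I. a i * f i \<omega>)"
    and "integral\<^sup>L \<Omega> (\<lambda>\<omega>. \<Sum>i\<in>I. a i * f i \<omega>) \<le> \<sigma> * (\<Sum>i\<in>I. a i)"
proof -
  show "integrable \<Omega> (\<lambda>\<omega>. \<Sum>i\<in>I. a i * f i \<omega>)" using f(1) by auto
  have "integral\<^sup>L \<Omega> (\<lambda>\<omega>. \<Sum>i\<in>I. a i * f i \<omega>) = (\<Sum>i\<in>I. a i * integral\<^sup>L \<Omega> (f i))"
    using f(1) by (simp add: integral_sum)
  also have "\<dots> \<le> (\<Sum>i\<in>I. a i * \<sigma>)" by (intro sum_mono mult_left_mono f(2) a)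
  finally show "integral\<^sup>L \<Omega> (\<lambda>\<omega>. \<Sum>i\<in>I. a i * f i \<omega>) \<le> \<sigma> * (\<Sum>i\<in>I. a i)"
    by (simp add: sum_distrib_left mult.commute)
qed

lemma integral_norm_le_imp_nonneg:
  assumes "(\<integral>\<omega>. norm (f \<omega>) \<partial>\<Omega>) \<le> \<sigma>"
  shows "0 \<le> \<sigma>"
proof -
  have "0 \<le> (\<integral>\<omega>. norm (f \<omega>) \<partial>\<Omega>)" by simp
  with assms show ?thesis by linarith
qed

text \<open>For \<open>s < 0\<close> the extended disturbance is \<open>0\<close>, whose bound \<open>0 \<le> \<sigma>\<^sub>w\<close> follows from A2(i) itself.\<close>

lemma wext_norm_integrable_le:
  assumes w_int: "\<And>s. integrable \<Omega> (\<lambda>\<omega>. norm (w s \<omega>))"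
    and A2: "\<And>s. (\<integral>\<omega>. norm (w s \<omega>) \<partial>\<Omega>) \<le> \<sigma>"
  shows "integrable \<Omega> (\<lambda>\<omega>. norm (wext (\<lambda>r. w r \<omega>) s))"
    and "(\<integral>\<omega>. norm (wext (\<lambda>r. w r \<omega>) s) \<partial>\<Omega>) \<le> \<sigma>"
proof -
  from integral_norm_le_imp_nonneg[OF A2] show "integrable \<Omega> (\<lambda>\<omega>. norm (wext (\<lambda>r. w r \<omega>) s))"
    and "(\<integral>\<omega>. norm (wext (\<lambda>r. w r \<omega>) s) \<partial>\<Omega>) \<le> \<sigma>"
    using w_int A2 unfolding wext_def by (cases "s < 0"; simp)+
qed

lemma integral_input_envelope_le:
  assumes w_int: "\<And>s. integrable \<Omega> (\<lambda>\<omega>. norm (w s \<omega>))"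
    and A2: "\<And>s. (\<integral>\<omega>. norm (w s \<omega>) \<partial>\<Omega>) \<le> \<sigma>"
    and \<gamma>: "0 < \<gamma>" "\<gamma> < 1" and kB: "0 \<le> kB" and \<kappa>: "0 \<le> \<kappa>"
  shows "integrable \<Omega> (\<lambda>\<omega>. input_envelope kB \<kappa> \<gamma> H (wext (\<lambda>r. w r \<omega>)) s)"
    and "(\<integral>\<omega>. input_envelope kB \<kappa> \<gamma> H (wext (\<lambda>r. w r \<omega>)) s \<partial>\<Omega>)
      \<le> \<sigma> * (\<kappa> * (\<kappa>^2 / \<gamma> + 2 * kB^2 * \<kappa>^5 / \<gamma>^2) + 2 * kB * \<kappa>^3 / \<gamma>)"
proof -
  note w = wext_norm_integrable_le[OF w_int A2]
  have \<sigma>: "0 \<le> \<sigma>" by (rule integral_norm_le_imp_nonneg[OF A2])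
  let ?Y = "\<lambda>\<omega>. \<Sum>i\<in>{0..2*H}. psi_weight kB \<kappa> \<gamma> H i * norm (wext (\<lambda>r. w r \<omega>) (s - 1 - int i))"
  let ?Z = "\<lambda>\<omega>. \<Sum>i\<in>{1..H}. 2 * kB * \<kappa>^3 * (1 - \<gamma>)^(i - 1) * norm (wext (\<lambda>r. w r \<omega>) (s - int i))"
  note Y = integral_weighted_sum_le[of "{0..2*H}" \<Omega> "\<lambda>i \<omega>. norm (wext (\<lambda>r. w r \<omega>) (s - 1 - int i))" \<sigma>
      "psi_weight kB \<kappa> \<gamma> H"]
  note Z = integral_weighted_sum_le[of "{1..H}" \<Omega> "\<lambda>i \<omega>. norm (wext (\<lambda>r. w r \<omega>) (s - int i))" \<sigma>
      "\<lambda>i. 2 * kB * \<kappa>^3 * (1 - \<gamma>)^(i - 1)"]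
  have Yi: "integrable \<Omega> ?Y" and EY: "integral\<^sup>L \<Omega> ?Y \<le> \<sigma> * (\<Sum>i\<in>{0..2*H}. psi_weight kB \<kappa> \<gamma> H i)"
    using Y w kB \<kappa> \<gamma> psi_weight_nonneg by auto
  have Zi: "integrable \<Omega> ?Z" and EZ: "integral\<^sup>L \<Omega> ?Z \<le> \<sigma> * (\<Sum>i\<in>{1..H}. 2 * kB * \<kappa>^3 * (1 - \<gamma>)^(i - 1))"
    using Z w kB \<kappa> \<gamma> by auto
  have "(\<Sum>i\<in>{1..H}. (1 - \<gamma>)^(i - 1)) \<le> 1 / (1 - (1 - \<gamma>))"
    using \<gamma> by (intro sum_power_inj_le_geometric) (auto simp: inj_on_def)
  then have "2 * kB * \<kappa>^3 * (\<Sum>i\<in>{1..H}. (1 - \<gamma>)^(i - 1)) \<le> 2 * kB * \<kappa>^3 * (1 / \<gamma>)"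
    using kB \<kappa> by (intro mult_left_mono) auto
  then have geo: "(\<Sum>i\<in>{1..H}. 2 * kB * \<kappa>^3 * (1 - \<gamma>)^(i - 1)) \<le> 2 * kB * \<kappa>^3 / \<gamma>"
    by (simp add: sum_distrib_left)
  show "integrable \<Omega> (\<lambda>\<omega>. input_envelope kB \<kappa> \<gamma> H (wext (\<lambda>r. w r \<omega>)) s)"
    unfolding input_envelope_def state_envelope_def using Yi Zi by auto
  have "(\<integral>\<omega>. input_envelope kB \<kappa> \<gamma> H (wext (\<lambda>r. w r \<omega>)) s \<partial>\<Omega>) = \<kappa> * integral\<^sup>L \<Omega> ?Y + integral\<^sup>L \<Omega> ?Z"
    unfolding input_envelope_def state_envelope_def using Yi Zi by simp
  also have "\<dots> \<le> \<kappa> * (\<sigma> * (\<kappa>^2 / \<gamma> + 2 * kB^2 * \<kappa>^5 / \<gamma>^2)) + \<sigma> * (2 * kB * \<kappa>^3 / \<gamma>)"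
  proof (rule add_mono)
    show "\<kappa> * integral\<^sup>L \<Omega> ?Y \<le> \<kappa> * (\<sigma> * (\<kappa>^2 / \<gamma> + 2 * kB^2 * \<kappa>^5 / \<gamma>^2))"
      using EY mult_left_mono[OF sum_psi_weight_le[OF \<gamma> kB \<kappa>, of H] \<sigma>] \<kappa>
      by (intro mult_left_mono) auto
    show "integral\<^sup>L \<Omega> ?Z \<le> \<sigma> * (2 * kB * \<kappa>^3 / \<gamma>)"
      using EZ mult_left_mono[OF geo \<sigma>] by linarith
  qed
  finally show "(\<integral>\<omega>. input_envelope kB \<kappa> \<gamma> H (wext (\<lambda>r. w r \<omega>)) s \<partial>\<Omega>)
      \<le> \<sigma> * (\<kappa> * (\<kappa>^2 / \<gamma> + 2 * kB^2 * \<kappa>^5 / \<gamma>^2) + 2 * kB * \<kappa>^3 / \<gamma>)"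
    by (simp add: algebra_simps)
qed

lemma integral_disturbance_mass_le:
  assumes w_int: "\<And>s. integrable \<Omega> (\<lambda>\<omega>. norm (w s \<omega>))"
    and A2: "\<And>s. (\<integral>\<omega>. norm (w s \<omega>) \<partial>\<Omega>) \<le> \<sigma>"
  shows "integrable \<Omega> (\<lambda>\<omega>. disturbance_mass H (wext (\<lambda>r. w r \<omega>)) s)"
    and "(\<integral>\<omega>. disturbance_mass H (wext (\<lambda>r. w r \<omega>)) s \<partial>\<Omega>) \<le> \<sigma> * (3 * real H + 1)"
proof -
  note w = wext_norm_integrable_le[OF w_int A2]
  let ?P = "\<lambda>\<omega>. \<Sum>i\<in>{0..2*H}. norm (wext (\<lambda>r. w r \<omega>) (s - 1 - int i))"
  let ?R = "\<lambda>\<omega>. \<Sum>i\<in>{1..H}. norm (wext (\<lambda>r. w r \<omega>) (s - int i))"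
  have P: "integrable \<Omega> ?P" "integral\<^sup>L \<Omega> ?P \<le> \<sigma> * (2 * real H + 1)"
    using integral_weighted_sum_le[of "{0..2*H}" \<Omega> "\<lambda>i \<omega>. norm (wext (\<lambda>r. w r \<omega>) (s - 1 - int i))" \<sigma> "\<lambda>_. 1"] w
    by (simp_all add: algebra_simps)
  have R: "integrable \<Omega> ?R" "integral\<^sup>L \<Omega> ?R \<le> \<sigma> * real H"
    using integral_weighted_sum_le[of "{1..H}" \<Omega> "\<lambda>i \<omega>. norm (wext (\<lambda>r. w r \<omega>) (s - int i))" \<sigma> "\<lambda>_. 1"] w
    by simp_all
  show "integrable \<Omega> (\<lambda>\<omega>. disturbance_mass H (wext (\<lambda>r. w r \<omega>)) s)"
    unfolding disturbance_mass_def using P(1) R(1) by simp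
  have "(\<integral>\<omega>. disturbance_mass H (wext (\<lambda>r. w r \<omega>)) s \<partial>\<Omega>) = integral\<^sup>L \<Omega> ?P + integral\<^sup>L \<Omega> ?R"
    unfolding disturbance_mass_def using P(1) R(1) by simp
  with P(2) R(2) show "(\<integral>\<omega>. disturbance_mass H (wext (\<lambda>r. w r \<omega>)) s \<partial>\<Omega>) \<le> \<sigma> * (3 * real H + 1)"
    by (simp add: algebra_simps)
qed

lemma (in prob_space) prob_ge_by_two_markov:
  fixes U V :: "'a \<Rightarrow> real"
  assumes U: "integrable M U" "\<And>x. 0 \<le> U x" and V: "integrable M V" "\<And>x. 0 \<le> V x"
    and ab: "0 < a" "0 < b"
    and good: "{x \<in> space M. P x} \<in> events"
    and implies: "\<And>x. x \<in> space M \<Longrightarrow> U x < a \<Longrightarrow> V x < b \<Longrightarrow> P x"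
  shows "1 - (expectation U / a + expectation V / b) \<le> prob {x \<in> space M. P x}"
proof -
  let ?BU = "{x \<in> space M. a \<le> U x}" and ?BV = "{x \<in> space M. b \<le> V x}"
  have events: "?BU \<in> events" "?BV \<in> events"
    using borel_measurable_integrable[OF U(1)] borel_measurable_integrable[OF V(1)] by measurable
  have "prob ?BU \<le> expectation U / a" "prob ?BV \<le> expectation V / b"
    using U V ab by (auto intro: integral_Markov_inequality_measure[where A="space M"])
  then have "1 - (expectation U / a + expectation V / b) \<le> 1 - prob (?BU \<union> ?BV)"
    using measure_Un_le[OF events] by simp
  also have "\<dots> = prob (space M - (?BU \<union> ?BV))"
    using prob_compl[of "?BU \<union> ?BV"] events by simp
  also have "\<dots> \<le> prob {x \<in> space M. P x}"
    using implies by (intro finite_measure_mono[OF _ good]) force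
  finally show ?thesis .
qed

lemma markov_terms_le:
  fixes \<kappa> kB \<gamma> \<sigma> C L R h :: real
  assumes \<kappa>: "1 \<le> \<kappa>" and kB: "1 \<le> kB" and \<gamma>: "0 < \<gamma>" "\<gamma> < 1" and \<sigma>: "0 \<le> \<sigma>" and C: "0 < C"
    and L: "1 \<le> L" and R: "1 \<le> R" and h: "h \<le> 2 / \<gamma> * L + 1"
  shows "\<sigma> * (\<kappa> * (\<kappa>^2 / \<gamma> + 2 * kB^2 * \<kappa>^5 / \<gamma>^2) + 2 * kB * \<kappa>^3 / \<gamma>) / C
         + \<sigma> * (3 * h + 1) / (C * L * R / (\<kappa>^3 * kB))
       \<le> 30 * \<sigma> * kB^2 * \<kappa>^6 / (C * \<gamma>^2 * (1 - \<gamma>))"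
proof -
  define p where "p = kB * \<kappa>^3 / \<gamma>"
  have \<kappa>3: "1 \<le> \<kappa>^3" using \<kappa> by simp
  have kB\<kappa>3: "1 \<le> kB * \<kappa>^3" using mult_mono[OF kB \<kappa>3] kB by simp
  then have p1: "1 \<le> p" unfolding p_def using \<gamma> by (simp add: le_divide_eq)
  have pp: "p \<le> p^2" using p1 by (simp add: power2_eq_square)
  have "\<kappa>^3 / \<gamma> \<le> p" unfolding p_def
    using \<gamma> \<kappa> \<kappa>3 mult_right_mono[OF kB, of "\<kappa>^3"] by (intro divide_right_mono) auto
  moreover have "\<kappa> * (\<kappa>^2 / \<gamma> + 2 * kB^2 * \<kappa>^5 / \<gamma>^2) + 2 * kB * \<kappa>^3 / \<gamma> = \<kappa>^3 / \<gamma> + 2 * p^2 + 2 * p"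
    unfolding p_def by (simp add: field_simps power2_eq_square eval_nat_numeral)
  ultimately have first: "\<kappa> * (\<kappa>^2 / \<gamma> + 2 * kB^2 * \<kappa>^5 / \<gamma>^2) + 2 * kB * \<kappa>^3 / \<gamma> \<le> 5 * p^2"
    using pp by linarith
  have "1 \<le> L / \<gamma>" using L \<gamma> by (simp add: le_divide_eq)
  then have "3 * h + 1 \<le> 10 * (L / \<gamma>)" using h by simp
  then have "(3 * h + 1) * (\<kappa>^3 * kB) / (C * L * R) \<le> 10 * (L / \<gamma>) * (\<kappa>^3 * kB) / (C * L * 1)"
    using C L R \<gamma> kB\<kappa>3 by (intro frac_le mult_right_mono mult_left_mono) (auto simp: mult.commute)
  also have "\<dots> = 10 * p / C" using L by (simp add: p_def field_simps)
  also have "\<dots> \<le> 10 * p^2 / C" using pp C by (simp add: divide_right_mono)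
  finally have second: "(3 * h + 1) / (C * L * R / (\<kappa>^3 * kB)) \<le> 10 * p^2 / C" by simp
  define Z where "Z = \<sigma> * p^2 / C"
  have Z: "0 \<le> Z" using \<sigma> C by (simp add: Z_def)
  have "\<sigma> * (\<kappa> * (\<kappa>^2 / \<gamma> + 2 * kB^2 * \<kappa>^5 / \<gamma>^2) + 2 * kB * \<kappa>^3 / \<gamma>) / C \<le> \<sigma> * (5 * p^2) / C"
    using first \<sigma> C by (intro divide_right_mono mult_left_mono) auto
  moreover have "\<sigma> * (3 * h + 1) / (C * L * R / (\<kappa>^3 * kB)) \<le> \<sigma> * (10 * p^2 / C)"
    using mult_left_mono[OF second \<sigma>] by simp
  ultimately have "\<sigma> * (\<kappa> * (\<kappa>^2 / \<gamma> + 2 * kB^2 * \<kappa>^5 / \<gamma>^2) + 2 * kB * \<kappa>^3 / \<gamma>) / C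
         + \<sigma> * (3 * h + 1) / (C * L * R / (\<kappa>^3 * kB)) \<le> 15 * Z"
    unfolding Z_def by simp
  also have "\<dots> \<le> 30 * Z / (1 - \<gamma>)"
  proof -
    have "Z * (1 - \<gamma>) \<le> Z" using Z \<gamma> by (simp add: mult_left_le)
    then show ?thesis using Z \<gamma> by (simp add: le_divide_eq)
  qed
  also have "\<dots> = 30 * \<sigma> * kB^2 * \<kappa>^6 / (C * \<gamma>^2 * (1 - \<gamma>))"
    unfolding Z_def p_def by (simp add: power_divide power_mult_distrib mult_ac flip: power_mult)
  finally show ?thesis .
qed

lemma horizon_bounds:
  assumes "3 \<le> T" "0 < \<gamma>" "H = nat \<lceil>2 / \<gamma> * ln (real T)\<rceil>"
  shows "1 \<le> ln (real T)" "1 \<le> (2 / \<gamma> * ln (real T) + 1) powr (1/2)"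
    "real H \<le> 2 / \<gamma> * ln (real T) + 1"
proof -
  have "exp 1 \<le> real T" using exp_le assms(1) by (metis numeral_le_real_of_nat_iff order_trans)
  then show L: "1 \<le> ln (real T)" using assms(1) by (simp add: ln_ge_iff)
  then show "1 \<le> (2 / \<gamma> * ln (real T) + 1) powr (1/2)"
    using assms(2) by (intro ge_one_powr_ge_zero) auto
  show "real H \<le> 2 / \<gamma> * ln (real T) + 1"
    using L assms(2,3) by (simp add: of_int_ceiling_le_add_one)
qed

lemma sets_Fsur_diff_le:
  fixes A :: "real^'n^'n" and B :: "real^'m^'n" and K :: "real^'n^'m"
  assumes "\<And>s. w s \<in> borel_measurable \<Omega>" and "assumption_A1 c Gc"
  shows "{\<omega> \<in> space \<Omega>. \<bar>Fsur c A B K H M (wext (\<lambda>r. w r \<omega>)) t - Fsur c A B K H M' (wext (\<lambda>r. w r \<omega>)) t\<bar> \<le> g}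
    \<in> sets \<Omega>"
  using borel_measurable_Fsur[where M = M, OF assms] borel_measurable_Fsur[where M = M', OF assms]
  by measurable

lemma Fsur_update_diff_le_threshold:
  fixes A :: "real^'n^'n" and B :: "real^'m^'n" and K :: "real^'n^'m"
    and M :: "int \<Rightarrow> nat \<Rightarrow> real^'n^'m" and Mc :: "nat \<Rightarrow> real^'n^'m"
  assumes A1: "assumption_A1 c Gc" and stab: "strongly_stable A B K \<kappa> \<gamma>" and \<gamma>: "0 \<le> \<gamma>"
    and window: "\<And>s. int t - 1 - int H \<le> s \<Longrightarrow> s \<le> int t \<Longrightarrow> M s \<in> Mset H (kappaB B) \<kappa> \<gamma>"
    and Mc: "Mc \<in> Mset H (kappaB B) \<kappa> \<gamma>"
    and small: "input_envelope (kappaB B) \<kappa> \<gamma> H z (int t) < a"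
      "disturbance_mass H z (int t) < b / (\<kappa>^3 * kappaB B)"
  shows "\<bar>Fsur c A B K H M z t - Fsur c A B K H (M(e := Mc)) z t\<bar>
    \<le> 2 * Gc * a * b * frob H (\<lambda>i. M e i - Mc i)"
proof -
  let ?k = "\<kappa>^3 * kappaB B" and ?D = "frob H (\<lambda>i. M e i - Mc i)"
  have \<kappa>: "1 \<le> \<kappa>" by (rule strongly_stable_kappa_ge_1[OF stab])
  have k: "0 < ?k" using \<kappa> kappaB_ge_1[of B] by (intro mult_pos_pos) auto
  have coeff: "0 \<le> 2 * Gc * ?D"
    using A1 frob_nonneg[of H] by (intro mult_nonneg_nonneg) (auto simp: assumption_A1_def)
  have U: "0 \<le> input_envelope (kappaB B) \<kappa> \<gamma> H z (int t)"
    using kappaB_ge_1[of B] \<kappa> strongly_stable_gamma_le_1[OF stab] by (intro input_envelope_nonneg) auto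
  have "?k * (input_envelope (kappaB B) \<kappa> \<gamma> H z (int t) * disturbance_mass H z (int t))
      \<le> ?k * (a * (b / ?k))"
    using small U disturbance_mass_nonneg[of H z "int t"] k by (intro mult_left_mono mult_mono) auto
  also have "\<dots> = a * b" using k by (auto simp: field_simps)
  finally have UV: "?k * (input_envelope (kappaB B) \<kappa> \<gamma> H z (int t) * disturbance_mass H z (int t)) \<le> a * b" .
  have "\<bar>Fsur c A B K H M z t - Fsur c A B K H (M(e := Mc)) z t\<bar>
      \<le> 2 * Gc * \<kappa>^3 * kappaB B * ?D * input_envelope (kappaB B) \<kappa> \<gamma> H z (int t) * disturbance_mass H z (int t)"
    by (rule Fsur_update_diff_le[where z = z and e = e and M = M and t = t, OF A1 stab \<gamma> window Mc])
  also have "\<dots> = 2 * Gc * ?D * (?k * (input_envelope (kappaB B) \<kappa> \<gamma> H z (int t) * disturbance_mass H z (int t)))"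
    by (simp add: mult_ac)
  also have "\<dots> \<le> 2 * Gc * ?D * (a * b)" by (rule mult_left_mono[OF UV coeff])
  finally show ?thesis by (simp add: mult_ac)
qed

theorem lemma3:
  fixes A :: "real^'n^'n" and B :: "real^'m^'n" and K :: "real^'n^'m"
    and c :: "nat \<Rightarrow> real^'n \<Rightarrow> real^'m \<Rightarrow> real" and Gc :: real
    and \<Omega> :: "'w measure" and w :: "nat \<Rightarrow> 'w \<Rightarrow> real^'n" and \<sigma>w :: real
    and \<kappa> \<gamma> :: real and T t k H :: nat and C :: real
    and M :: "int \<Rightarrow> nat \<Rightarrow> real^'n^'m" and Mc :: "nat \<Rightarrow> real^'n^'m"
  assumes A1: "assumption_A1 c Gc"
    and P: "prob_space \<Omega>"
    and w_meas: "\<And>s. w s \<in> borel_measurable \<Omega>"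
    and w_int: "\<And>s. integrable \<Omega> (\<lambda>\<omega>. norm (w s \<omega>))"
    and A2: "\<And>s. (\<integral>\<omega>. norm (w s \<omega>) \<partial>\<Omega>) \<le> \<sigma>w"
    and stab: "strongly_stable A B K \<kappa> \<gamma>"
    and gam: "0 < \<gamma>" "\<gamma> < 1"
    and H_def: "H = nat \<lceil>2 / \<gamma> * ln (real T)\<rceil>"
    and T3: "T \<ge> 3" and tT: "t \<le> T - 1" and kH: "k \<le> H + 1" and C: "C > 0"
    and MM: "\<And>s. int t - 1 - int H \<le> s \<Longrightarrow> s \<le> int t \<Longrightarrow> M s \<in> Mset H (kappaB B) \<kappa> \<gamma>"
    and McM: "Mc \<in> Mset H (kappaB B) \<kappa> \<gamma>"
  shows "measure \<Omega> {\<omega> \<in> space \<Omega>.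
             \<bar>Fsur c A B K H M (wext (\<lambda>r. w r \<omega>)) t
              - Fsur c A B K H (M(int t - int k := Mc)) (wext (\<lambda>r. w r \<omega>)) t\<bar>
             \<le> 2 * Gc * C^2 * ln (real T) * (2 / \<gamma> * ln (real T) + 1) powr (1/2)
                * frob H (\<lambda>i. M (int t - int k) i - Mc i)}
         \<ge> 1 - 30 * \<sigma>w * (kappaB B)^2 * \<kappa>^6 / (C * \<gamma>^2 * (1 - \<gamma>))"
proof -
  interpret prob_space \<Omega> by (rule P)
  let ?U = "\<lambda>\<omega>. input_envelope (kappaB B) \<kappa> \<gamma> H (wext (\<lambda>r. w r \<omega>)) (int t)"
  let ?V = "\<lambda>\<omega>. disturbance_mass H (wext (\<lambda>r. w r \<omega>)) (int t)"
  let ?L = "ln (real T)" and ?R = "(2 / \<gamma> * ln (real T) + 1) powr (1/2)"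
  let ?thr = "C * ?L * ?R / (\<kappa>^3 * kappaB B)"
  have \<kappa>: "1 \<le> \<kappa>" by (rule strongly_stable_kappa_ge_1[OF stab])
  note horizon = horizon_bounds[OF T3 gam(1) H_def]
  have thr: "0 < ?thr"
    using C horizon \<kappa> kappaB_ge_1[of B] by (intro divide_pos_pos mult_pos_pos) auto
  note U = integral_input_envelope_le[where w = w and kB = "kappaB B" and \<kappa> = \<kappa> and H = H and s = "int t",
      OF w_int A2 gam order_trans[OF zero_le_one kappaB_ge_1] order_trans[OF zero_le_one \<kappa>]]
  note V = integral_disturbance_mass_le[where w = w and H = H and s = "int t", OF w_int A2]
  have "1 - (expectation ?U / C + expectation ?V / ?thr) \<le> measure \<Omega> {\<omega> \<in> space \<Omega>.
      \<bar>Fsur c A B K H M (wext (\<lambda>r. w r \<omega>)) t - Fsur c A B K H (M(int t - int k := Mc)) (wext (\<lambda>r. w r \<omega>)) t\<bar>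
      \<le> 2 * Gc * C^2 * ?L * ?R * frob H (\<lambda>i. M (int t - int k) i - Mc i)}"
  proof (rule prob_ge_by_two_markov[OF U(1) _ V(1) disturbance_mass_nonneg C thr sets_Fsur_diff_le[OF w_meas A1]])
    show "0 \<le> ?U \<omega>" for \<omega> using kappaB_ge_1[of B] \<kappa> gam by (intro input_envelope_nonneg) auto
  qed (use Fsur_update_diff_le_threshold[OF A1 stab _ MM McM, where b = "C * ?L * ?R"] gam
       in \<open>auto simp: power2_eq_square mult_ac\<close>)
  moreover have "expectation ?U / C + expectation ?V / ?thr \<le> 30 * \<sigma>w * (kappaB B)^2 * \<kappa>^6 / (C * \<gamma>^2 * (1 - \<gamma>))"
    using divide_right_mono[OF U(2) less_imp_le[OF C]] divide_right_mono[OF V(2) less_imp_le[OF thr]]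
      markov_terms_le[OF \<kappa> kappaB_ge_1[of B] gam integral_norm_le_imp_nonneg[OF A2] C horizon] by linarith
  ultimately show ?thesis by linarith
qed

end
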